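(* Let $N,M$ be positive integers, let $\mathscr{A}\subset\mathscr{M}(N,M)$ and $\mathscr{B}\subset\mathscr{M}(M,N)$ be finite sets of real matrices, and let $\|\cdot\|$ be a submultiplicative norm on $\mathscr{M}(N,N)$. Suppose that for every sequence $\{A_n\}_{n\ge1}$ with $A_n\in\mathscr{A}$ there exists a sequence $\{B_n\}_{n\ge1}$ with $B_n\in\mathscr{B}$ such that $\|A_nB_n\cdots A_1B_1\|\to0$ as $n\to\infty$. Then there exist a positive integer $k_*$ and a constant $\mu\in(0,1)$ such that for every sequence $\{A_n\in\mathscr{A}\}$ there exist a positive integer $k\le k_*$ and matrices $B_1,\ldots,B_k\in\mathscr{B}$ with $\|A_kB_k\cdots A_1B_1\|\le\mu$.
   Context: $\mathscr{M}(p,q)$ denotes the space of $p\times q$ real matrices with the topology of elementwise convergence. A norm on $\mathscr{M}(N,N)$ is submultiplicative if $\|XY\|\le\|X\|\,\|Y\|$ for all $X,Y$. *)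

theory Defs
  imports "HOL-Analysis.Analysis"
begin

definition submult_norm :: "(real^'n^'n \<Rightarrow> real) \<Rightarrow> bool" where
  "submult_norm nrm \<longleftrightarrow>
     (\<forall>X. 0 \<le> nrm X) \<and>
     (\<forall>X. nrm X = 0 \<longleftrightarrow> X = 0) \<and>
     (\<forall>c X. nrm (c *\<^sub>R X) = \<bar>c\<bar> * nrm X) \<and>
     (\<forall>X Y. nrm (X + Y) \<le> nrm X + nrm Y) \<and>
     (\<forall>X Y. nrm (X ** Y) \<le> nrm X * nrm Y)"

fun prodAB :: "(nat \<Rightarrow> real^'m^'n) \<Rightarrow> (nat \<Rightarrow> real^'n^'m) \<Rightarrow> nat \<Rightarrow> real^'n^'n" where
  "prodAB A B 0 = mat 1"
| "prodAB A B (Suc n) = (A (Suc n) ** B (Suc n)) ** prodAB A B n"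

end

theory Submission
  imports Defs
begin

text \<open>The hypothesis yields, for every admissible sequence A, some depth k within which a product
  of norm at most 1/2 can be reached; since this property depends only on A 1, ..., A k and
  \<A> is finite, Koenig's lemma makes the depth uniform. If no uniform depth existed, the prefixes
  with arbitrarily deep bad extensions would form an infinite finitely branching tree, and an
  infinite branch of it would be a sequence for which no depth works.\<close>

definition seqs_in :: "'a set \<Rightarrow> (nat \<Rightarrow> 'a) set" where
  "seqs_in \<A> = {A. \<forall>n\<ge>1. A n \<in> \<A>}"

definition seqs_extending :: "'a set \<Rightarrow> nat \<Rightarrow> (nat \<Rightarrow> 'a) \<Rightarrow> (nat \<Rightarrow> 'a) set" where
  "seqs_extending \<A> m p = {A \<in> seqs_in \<A>. \<forall>i\<in>{1..m}. A i = p i}"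

lemma seqs_extending_0 [simp]: "seqs_extending \<A> 0 p = seqs_in \<A>"
  by (simp add: seqs_extending_def)

lemma seqs_extending_Suc:
  assumes "A \<in> seqs_extending \<A> m p"
  shows "A (Suc m) \<in> \<A>" and "A \<in> seqs_extending \<A> (Suc m) (p(Suc m := A (Suc m)))"
  using assms by (auto simp: seqs_extending_def seqs_in_def le_Suc_eq)

definition depth_unbounded ::
    "(nat \<Rightarrow> (nat \<Rightarrow> 'a) \<Rightarrow> bool) \<Rightarrow> 'a set \<Rightarrow> nat \<Rightarrow> (nat \<Rightarrow> 'a) \<Rightarrow> bool" where
  "depth_unbounded G \<A> m p \<longleftrightarrow> (\<exists>\<^sub>F k in sequentially. \<exists>A\<in>seqs_extending \<A> m p. \<not> G k A)"

lemma depth_unbounded_extends: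
  assumes "finite \<A>" and "depth_unbounded G \<A> m p"
  shows "\<exists>a. depth_unbounded G \<A> (Suc m) (p(Suc m := a))"
proof (rule ccontr)
  assume "\<not> ?thesis"
  then have "\<forall>a\<in>\<A>. \<forall>\<^sub>F k in sequentially. \<forall>A\<in>seqs_extending \<A> (Suc m) (p(Suc m := a)). G k A"
    by (simp add: depth_unbounded_def not_frequently)
  then have "\<forall>\<^sub>F k in sequentially. \<forall>a\<in>\<A>. \<forall>A\<in>seqs_extending \<A> (Suc m) (p(Suc m := a)). G k A"
    using \<open>finite \<A>\<close> by (simp add: eventually_ball_finite)
  then have "\<forall>\<^sub>F k in sequentially. \<forall>A\<in>seqs_extending \<A> m p. G k A"
    by (rule eventually_mono) (metis seqs_extending_Suc)
  then show False
    using assms(2) by (simp add: depth_unbounded_def frequently_def)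
qed

lemma uniform_depth_if_prefix_determined:
  fixes G :: "nat \<Rightarrow> (nat \<Rightarrow> 'a) \<Rightarrow> bool"
  assumes "finite \<A>"
    and mono: "\<And>k k' A. G k A \<Longrightarrow> k \<le> k' \<Longrightarrow> G k' A"
    and prefix: "\<And>k A A'. G k A \<Longrightarrow> \<forall>i\<in>{1..k}. A' i = A i \<Longrightarrow> G k A'"
    and depth: "\<And>A. A \<in> seqs_in \<A> \<Longrightarrow> \<exists>k. G k A"
  shows "\<exists>k. \<forall>A\<in>seqs_in \<A>. G k A"
proof (rule ccontr)
  let ?bad = "depth_unbounded G \<A>"
  assume "\<not> ?thesis"
  then have "?bad 0 p" for p :: "nat \<Rightarrow> 'a"
    by (auto simp: depth_unbounded_def frequently_sequentially)
  then have "\<exists>f. \<forall>m. ?bad m (f m) \<and> (\<forall>i. i \<noteq> Suc m \<longrightarrow> f (Suc m) i = f m i)"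
  proof (intro dependent_nat_choice)
    fix m p assume "?bad m p"
    then obtain a where "?bad (Suc m) (p(Suc m := a))"
      using depth_unbounded_extends[OF \<open>finite \<A>\<close>] by blast
    then show "\<exists>p'. ?bad (Suc m) p' \<and> (\<forall>i. i \<noteq> Suc m \<longrightarrow> p' i = p i)"
      by (intro exI[of _ "p(Suc m := a)"]) simp
  qed blast
  then obtain f where f: "\<And>m. ?bad m (f m) \<and> (\<forall>i. i \<noteq> Suc m \<longrightarrow> f (Suc m) i = f m i)"
    by blast
  define A where "A i = f i i" for i
  have f_diagonal: "f k i = A i" if "i \<le> k" for i k
    using that
  proof (induction k)
    case (Suc k)
    then show ?case
      using f[of k] by (cases "i = Suc k") (auto simp: A_def)
  qed (simp add: A_def)
  have "A \<in> seqs_in \<A>"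
  proof (unfold seqs_in_def, safe)
    fix n :: nat assume "1 \<le> n"
    obtain A' where "A' \<in> seqs_extending \<A> n (f n)"
      using f[of n] frequently_ex by (fastforce simp: depth_unbounded_def)
    then show "A n \<in> \<A>"
      using \<open>1 \<le> n\<close> by (auto simp: seqs_extending_def seqs_in_def A_def)
  qed
  then obtain k where "G k A"
    using depth by blast
  obtain n A' where "k \<le> n" "A' \<in> seqs_extending \<A> k (f k)" "\<not> G n A'"
    using f[of k] unfolding depth_unbounded_def frequently_sequentially by blast
  moreover have "G k A'"
    using prefix[OF \<open>G k A\<close>] calculation(2) by (simp add: seqs_extending_def f_diagonal)
  ultimately show False
    using mono by blast
qed

lemma prodAB_prefix:
  "\<forall>i\<in>{1..n}. A' i = A i \<Longrightarrow> prodAB A' B n = prodAB A B n"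
  by (induction n) auto

definition contracted_within ::
    "(real^'n^'m) set \<Rightarrow> (real^'n^'n \<Rightarrow> real) \<Rightarrow> real \<Rightarrow> nat \<Rightarrow> (nat \<Rightarrow> real^'m^'n) \<Rightarrow> bool" where
  "contracted_within \<B> nrm \<mu> k A \<longleftrightarrow>
     (\<exists>n. 1 \<le> n \<and> n \<le> k \<and> (\<exists>B. (\<forall>i\<in>{1..n}. B i \<in> \<B>) \<and> nrm (prodAB A B n) \<le> \<mu>))"

lemma contracted_within_mono:
  "contracted_within \<B> nrm \<mu> k A \<Longrightarrow> k \<le> k' \<Longrightarrow> contracted_within \<B> nrm \<mu> k' A"
  unfolding contracted_within_def by (meson order_trans)

lemma contracted_within_prefix:
  assumes "contracted_within \<B> nrm \<mu> k A" and "\<forall>i\<in>{1..k}. A' i = A i"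
  shows "contracted_within \<B> nrm \<mu> k A'"
proof -
  obtain n B where "1 \<le> n" "n \<le> k" "\<forall>i\<in>{1..n}. B i \<in> \<B>" "nrm (prodAB A B n) \<le> \<mu>"
    using assms(1) unfolding contracted_within_def by blast
  moreover have "prodAB A' B n = prodAB A B n"
    using assms(2) \<open>n \<le> k\<close> by (intro prodAB_prefix) auto
  ultimately show ?thesis
    unfolding contracted_within_def by metis
qed

lemma contracted_within_if_tendsto_0:
  assumes "\<forall>n\<ge>1. B n \<in> \<B>" and "(\<lambda>n. nrm (prodAB A B n)) \<longlonglongrightarrow> 0" and "0 < \<mu>"
  shows "\<exists>k. contracted_within \<B> nrm \<mu> k A"
proof -
  obtain N where N: "\<And>n. n \<ge> N \<Longrightarrow> nrm (prodAB A B n) < \<mu>"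
    using order_tendstoD(2)[OF assms(2,3)] by (auto simp: eventually_sequentially)
  have "nrm (prodAB A B (Suc N)) \<le> \<mu>"
    using N[of "Suc N"] by linarith
  then have "contracted_within \<B> nrm \<mu> (Suc N) A"
    using assms(1) unfolding contracted_within_def by (intro exI[of _ "Suc N"] conjI exI[of _ B]) auto
  then show ?thesis ..
qed

theorem lemma1:
  fixes \<A> :: "(real^'m^'n) set" and \<B> :: "(real^'n^'m) set"
    and nrm :: "real^'n^'n \<Rightarrow> real"
  assumes "finite \<A>" and "finite \<B>"
    and "submult_norm nrm"
    and "\<forall>A. (\<forall>n\<ge>1. A n \<in> \<A>) \<longrightarrow>
           (\<exists>B. (\<forall>n\<ge>1. B n \<in> \<B>) \<and> (\<lambda>n. nrm (prodAB A B n)) \<longlonglongrightarrow> 0)"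
  shows "\<exists>kstar::nat. kstar \<ge> 1 \<and> (\<exists>\<mu>::real. 0 < \<mu> \<and> \<mu> < 1 \<and>
           (\<forall>A. (\<forall>n\<ge>1. A n \<in> \<A>) \<longrightarrow>
              (\<exists>k. 1 \<le> k \<and> k \<le> kstar \<and>
                 (\<exists>B. (\<forall>n\<in>{1..k}. B n \<in> \<B>) \<and> nrm (prodAB A B k) \<le> \<mu>))))"
proof -
  have "\<exists>k. contracted_within \<B> nrm (1/2) k A" if "A \<in> seqs_in \<A>" for A
    using assms(4) that contracted_within_if_tendsto_0[of B \<B> nrm A "1/2" for B]
    unfolding seqs_in_def by auto
  then obtain k where "\<forall>A\<in>seqs_in \<A>. contracted_within \<B> nrm (1/2) k A"
    using uniform_depth_if_prefix_determined[OF assms(1), of "contracted_within \<B> nrm (1/2)"]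
      contracted_within_mono contracted_within_prefix by blast
  then have "\<forall>A\<in>seqs_in \<A>. contracted_within \<B> nrm (1/2) (Suc k) A"
    using contracted_within_mono le_SucI by blast
  then show ?thesis
    unfolding contracted_within_def seqs_in_def
    by (intro exI[of _ "Suc k"] conjI exI[of _ "1/2::real"]) auto
qed

end
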